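(* Let $b(r),h(r)$ be smooth positive functions on an interval of $r>0$ and consider the metric $ds^2=-b^2dt^2+\dfrac{h^2}{b^2}dr^2+r^2(d\theta^2+\sin^2\theta\,d\phi^2)$. Let $\kappa_1,\kappa_2,\kappa_3$ be constants and $$K_{kl}=(\kappa_2r^2-2\kappa_3b^2)u_ku_l+(\kappa_1+2\kappa_2r^2+\kappa_3b^2)g_{kl}-\kappa_2r^2\,\chi_k\chi_l .$$ Let $\mathscr L$ be a differentiable function of one variable (a nonlinear electrodynamics Lagrangian) with derivative $\mathscr L_F$, let $\mathbb E(r),\mathbb B(r)$ be functions, $F=\tfrac12(\mathbb B^2-\mathbb E^2)$, and $$T_{kl}=2(\mathbb E^2+\mathbb B^2)\,\mathscr L_F(F)\,(u_ku_l-\chi_k\chi_l)+2g_{kl}\left[\mathbb B^2\mathscr L_F(F)-\mathscr L(F)\right].$$ If the conformal Killing gravity field equations $R_{kl}-\tfrac12Rg_{kl}=T_{kl}+K_{kl}$ hold, then there is a constant $\kappa_4$ such that $$\frac{1}{h^2}=\kappa_3r^2+\kappa_4 .$$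
   Context: $u_k$ is the unit timelike covector with components $u_0=-b$ and all others zero; $\chi_k$ is the unit radial covector with $\chi_r=h/b$ and all others zero. $R_{kl}$ is the Ricci tensor and $R$ the scalar curvature. $T_{kl}$ is the stress-energy tensor of nonlinear electrodynamics with electric field magnitude $\mathbb E$ and magnetic field magnitude $\mathbb B$ in this static spherically symmetric setting. *)

theory Defs
  imports "HOL-Analysis.Analysis"
begin

text \<open>Coordinates on a 4-dimensional chart are points of real^4; the index type is 4.
  Coordinate 0 = t, 1 = r, 2 = theta, 3 = phi.
  A metric field is a map from coordinates to a 4x4 symmetric matrix.\<close>

type_synonym coord = "real ^ 4"
type_synonym metric_field = "coord \<Rightarrow> real ^ 4 ^ 4"

definition pd :: "(coord \<Rightarrow> real) \<Rightarrow> 4 \<Rightarrow> coord \<Rightarrow> real" where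
  "pd f i x = deriv (\<lambda>s. f (\<chi> j. if j = i then s else x $ j)) (x $ i)"

definition ginv :: "metric_field \<Rightarrow> coord \<Rightarrow> real ^ 4 ^ 4" where
  "ginv g x = matrix_inv (g x)"

definition christoffel :: "metric_field \<Rightarrow> 4 \<Rightarrow> 4 \<Rightarrow> 4 \<Rightarrow> coord \<Rightarrow> real" where
  "christoffel g a b c x =
     (1/2) * (\<Sum>d\<in>UNIV. ginv g x $ a $ d *
        (pd (\<lambda>y. g y $ d $ b) c x + pd (\<lambda>y. g y $ d $ c) b x - pd (\<lambda>y. g y $ b $ c) d x))"

text \<open>Ricci tensor R_{bd} = R^a_{bad}, standard (MTW) sign convention.\<close>
definition ricci :: "metric_field \<Rightarrow> 4 \<Rightarrow> 4 \<Rightarrow> coord \<Rightarrow> real" where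
  "ricci g b d x =
     (\<Sum>a\<in>UNIV. pd (\<lambda>y. christoffel g a b d y) a x - pd (\<lambda>y. christoffel g a b a y) d x
        + (\<Sum>e\<in>UNIV. christoffel g a a e x * christoffel g e b d x
                     - christoffel g a d e x * christoffel g e b a x))"

definition scalar_curv :: "metric_field \<Rightarrow> coord \<Rightarrow> real" where
  "scalar_curv g x = (\<Sum>b\<in>UNIV. \<Sum>d\<in>UNIV. ginv g x $ b $ d * ricci g b d x)"

definition smooth_on :: "real set \<Rightarrow> (real \<Rightarrow> real) \<Rightarrow> bool" where
  "smooth_on I f \<longleftrightarrow> (\<forall>n. \<forall>r\<in>I. ((deriv ^^ n) f) differentiable (at r))"

definition ssm_metric :: "(real \<Rightarrow> real) \<Rightarrow> (real \<Rightarrow> real) \<Rightarrow> metric_field" where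
  "ssm_metric b h x = (\<chi> k l.
      if k \<noteq> l then 0
      else if k = 0 then - (b (x$1))\<^sup>2
      else if k = 1 then (h (x$1))\<^sup>2 / (b (x$1))\<^sup>2
      else if k = 2 then (x$1)\<^sup>2
      else (x$1)\<^sup>2 * (sin (x$2))\<^sup>2)"

definition u_cov :: "(real \<Rightarrow> real) \<Rightarrow> coord \<Rightarrow> 4 \<Rightarrow> real" where
  "u_cov b x k = (if k = 0 then - b (x$1) else 0)"

definition chi_cov :: "(real \<Rightarrow> real) \<Rightarrow> (real \<Rightarrow> real) \<Rightarrow> coord \<Rightarrow> 4 \<Rightarrow> real" where
  "chi_cov b h x k = (if k = 1 then h (x$1) / b (x$1) else 0)"

definition K_tensor :: "real \<Rightarrow> real \<Rightarrow> real \<Rightarrow> (real \<Rightarrow> real) \<Rightarrow> (real \<Rightarrow> real) \<Rightarrow> coord \<Rightarrow> 4 \<Rightarrow> 4 \<Rightarrow> real" where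
  "K_tensor k1 k2 k3 b h x k l =
     (let r = x$1 in
       (k2 * r\<^sup>2 - 2 * k3 * (b r)\<^sup>2) * u_cov b x k * u_cov b x l
       + (k1 + 2 * k2 * r\<^sup>2 + k3 * (b r)\<^sup>2) * ssm_metric b h x $ k $ l
       - k2 * r\<^sup>2 * chi_cov b h x k * chi_cov b h x l)"

definition T_tensor :: "(real \<Rightarrow> real) \<Rightarrow> (real \<Rightarrow> real) \<Rightarrow> (real \<Rightarrow> real) \<Rightarrow> (real \<Rightarrow> real)
    \<Rightarrow> (real \<Rightarrow> real) \<Rightarrow> (real \<Rightarrow> real) \<Rightarrow> coord \<Rightarrow> 4 \<Rightarrow> 4 \<Rightarrow> real" where
  "T_tensor L LF E B b h x k l =
     (let r = x$1; F = ((B r)\<^sup>2 - (E r)\<^sup>2) / 2 in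
       2 * ((E r)\<^sup>2 + (B r)\<^sup>2) * LF F * (u_cov b x k * u_cov b x l - chi_cov b h x k * chi_cov b h x l)
       + 2 * ssm_metric b h x $ k $ l * ((B r)\<^sup>2 * LF F - L F))"

end

theory Submission
  imports Defs
begin

(* Contract the field equations with the radial null vector n = (h/b) d/dt + b d/dr.
   Since g(n,n) = 0 the scalar curvature term drops out, and since the stress tensor of
   nonlinear electrodynamics is a combination of g and u u - chi chi, which also vanishes on
   (n,n), T(n,n) = 0 whatever the Lagrangian is.  What remains is
   Ric(n,n) = 2 b^2 h'/(r h) = K(n,n) = -2 k3 b^2 h^2, i.e. h' = -k3 r h^3, so that
   (1/h^2)' = 2 k3 r and 1/h^2 - k3 r^2 is constant on the interval I. *)

lemma UNIV_4_from_0: "(UNIV :: 4 set) = {0, 1, 2, 3}"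
proof -
  have "(4::4) = 0" by simp
  with UNIV_4 show ?thesis by auto
qed

lemma sum_4_from_0: "sum f (UNIV :: 4 set) = f 0 + f 1 + f 2 + f 3"
  unfolding UNIV_4_from_0 by (simp add: ac_simps)

lemma cases_4_from_0:
  fixes i :: 4
  obtains "i = 0" | "i = 1" | "i = 2" | "i = 3"
  using UNIV_4_from_0 by blast

lemma pd_eq_deriv_on_line:
  assumes "open U" "x $ i \<in> U"
    and "\<And>s. s \<in> U \<Longrightarrow> f (\<chi> j. if j = i then s else x $ j) = F s"
  shows "pd f i x = deriv F (x $ i)"
  unfolding pd_def using assms
  by (intro deriv_cong_ev eventually_mono[OF eventually_nhds_in_open]) auto

lemma pd_function_of_r_theta:
  "pd (\<lambda>y. f (y $ 1) (y $ 2)) c x =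
     (if c = 1 then deriv (\<lambda>s. f s (x $ 2)) (x $ 1)
      else if c = 2 then deriv (\<lambda>s. f (x $ 1) s) (x $ 2) else 0)"
  by (cases c rule: cases_4_from_0) (simp_all add: pd_def)

lemma deriv_eq_on_open:
  assumes "open U" "r \<in> U" "\<And>s. s \<in> U \<Longrightarrow> f s = g s" "(g has_real_derivative D) (at r)"
  shows "deriv f r = D"
proof -
  have "deriv f r = deriv g r"
    using assms(1-3) by (intro deriv_cong_ev eventually_mono[OF eventually_nhds_in_open]) auto
  with assms(4) show ?thesis
    by (simp add: DERIV_imp_deriv)
qed

lemma matrix_inv_eqI:
  fixes A D :: "'a::semiring_1 ^ 'n ^ 'n"
  assumes "A ** D = mat 1" "D ** A = mat 1"
  shows "matrix_inv A = D"
proof -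
  define M where "M = matrix_inv A"
  have "\<exists>A'. A ** A' = mat 1 \<and> A' ** A = mat 1"
    using assms by blast
  then have M: "A ** M = mat 1 \<and> M ** A = mat 1"
    unfolding M_def matrix_inv_def by (rule someI_ex)
  have "M = M ** (A ** D)" using assms by simp
  also have "\<dots> = D" using M by (simp add: matrix_mul_assoc)
  finally show ?thesis unfolding M_def .
qed

lemma matrix_inv_diagonal:
  fixes d :: "'n::finite \<Rightarrow> 'a::field"
  assumes "\<And>i. d i \<noteq> 0"
  shows "matrix_inv (\<chi> i j. if i = j then d i else 0) = (\<chi> i j. if i = j then inverse (d i) else 0)"
proof (rule matrix_inv_eqI)
  have diag_prod: "(\<Sum>k\<in>UNIV. (if i = k then a else 0) * (if k = j then f k else 0))
      = (if i = j then a * f i else 0)" for a :: 'a and f and i j :: 'n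
  proof -
    have "(\<Sum>k\<in>UNIV. (if i = k then a else 0) * (if k = j then f k else 0))
        = (\<Sum>k\<in>UNIV. if k = i then (if i = j then a * f i else 0) else 0)"
      by (rule sum.cong) auto
    also have "\<dots> = (if i = j then a * f i else 0)"
      by simp
    finally show ?thesis .
  qed
  show "(\<chi> i j. if i = j then d i else 0) ** (\<chi> i j. if i = j then inverse (d i) else 0) = mat 1"
    "(\<chi> i j. if i = j then inverse (d i) else 0) ** (\<chi> i j. if i = j then d i else 0) = mat 1"
    unfolding matrix_matrix_mult_def mat_def vec_lambda_beta diag_prod
    using assms by (simp_all add: vec_eq_iff)
qed

lemma christoffel_diagonal:
  fixes g :: metric_field
  assumes diag: "\<And>y k l. k \<noteq> l \<Longrightarrow> g y $ k $ l = 0"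
    and nz: "\<And>k. g x $ k $ k \<noteq> 0"
  shows "christoffel g a c d x =
    ((if a = c then pd (\<lambda>y. g y $ a $ a) d x else 0) + (if a = d then pd (\<lambda>y. g y $ a $ a) c x else 0)
     - (if c = d then pd (\<lambda>y. g y $ c $ c) a x else 0)) / (2 * g x $ a $ a)"
proof -
  have "g x = (\<chi> i j. if i = j then g x $ i $ i else 0)"
    using diag by (simp add: vec_eq_iff)
  then have "ginv g x = (\<chi> i j. if i = j then inverse (g x $ i $ i) else 0)"
    unfolding ginv_def using matrix_inv_diagonal[of "\<lambda>i. g x $ i $ i"] nz by metis
  then have ginv_sum: "(\<Sum>e\<in>UNIV. ginv g x $ a $ e * Q e) = Q a / g x $ a $ a" for Q
    by (simp add: if_distrib if_distribR divide_inverse cong: if_cong)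
  have pd_diag: "pd (\<lambda>y. g y $ k $ l) i x = (if k = l then pd (\<lambda>y. g y $ k $ k) i x else 0)"
    for k l i
    using diag by (cases "k = l") (simp_all add: pd_def)
  show ?thesis
    unfolding christoffel_def ginv_sum pd_diag[of a c] pd_diag[of a d] pd_diag[of c d]
    by simp
qed

definition ssm_diag :: "(real \<Rightarrow> real) \<Rightarrow> (real \<Rightarrow> real) \<Rightarrow> 4 \<Rightarrow> real \<Rightarrow> real \<Rightarrow> real"
  where
  "ssm_diag b h k r \<theta> =
    (if k = 0 then - (b r)\<^sup>2 else if k = 1 then (h r)\<^sup>2 / (b r)\<^sup>2
     else if k = 2 then r\<^sup>2 else r\<^sup>2 * (sin \<theta>)\<^sup>2)"

definition ssm_diag_pd ::
    "(real \<Rightarrow> real) \<Rightarrow> (real \<Rightarrow> real) \<Rightarrow> 4 \<Rightarrow> 4 \<Rightarrow> real \<Rightarrow> real \<Rightarrow> real"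
  where
  "ssm_diag_pd b h k c r \<theta> =
    (if c = 1 then
       (if k = 0 then - 2 * b r * deriv b r
        else if k = 1 then 2 * h r * deriv h r / (b r)\<^sup>2 - 2 * (h r)\<^sup>2 * deriv b r / (b r) ^ 3
        else if k = 2 then 2 * r else 2 * r * (sin \<theta>)\<^sup>2)
     else if c = 2 \<and> k = 3 then 2 * r\<^sup>2 * sin \<theta> * cos \<theta> else 0)"

definition ssm_christoffel ::
    "(real \<Rightarrow> real) \<Rightarrow> (real \<Rightarrow> real) \<Rightarrow> 4 \<Rightarrow> 4 \<Rightarrow> 4 \<Rightarrow> real \<Rightarrow> real \<Rightarrow> real"
  where
  "ssm_christoffel b h a c d r \<theta> =
    ((if a = c then ssm_diag_pd b h a d r \<theta> else 0) + (if a = d then ssm_diag_pd b h a c r \<theta> else 0)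
     - (if c = d then ssm_diag_pd b h c a r \<theta> else 0)) / (2 * ssm_diag b h a r \<theta>)"

lemma ssm_metric_eq: "ssm_metric b h y $ k $ l = (if k = l then ssm_diag b h k (y $ 1) (y $ 2) else 0)"
  by (simp add: ssm_metric_def ssm_diag_def)

lemma deriv_ssm_diag_r:
  assumes "b differentiable (at r)" "h differentiable (at r)" "b r \<noteq> 0"
  shows "deriv (\<lambda>s. ssm_diag b h k s \<theta>) r = ssm_diag_pd b h k 1 r \<theta>"
proof (rule DERIV_imp_deriv)
  have "(b has_real_derivative deriv b r) (at r)" "(h has_real_derivative deriv h r) (at r)"
    using assms DERIV_deriv_iff_real_differentiable by blast+
  with \<open>b r \<noteq> 0\<close> show "((\<lambda>s. ssm_diag b h k s \<theta>) has_real_derivative ssm_diag_pd b h k 1 r \<theta>) (at r)"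
    by (cases k rule: cases_4_from_0)
      (auto simp: ssm_diag_def ssm_diag_pd_def intro!: derivative_eq_intros,
       auto simp: field_simps eval_nat_numeral)
qed

lemma deriv_ssm_diag_theta: "deriv (\<lambda>s. ssm_diag b h k r s) \<theta> = ssm_diag_pd b h k 2 r \<theta>"
  by (cases k rule: cases_4_from_0)
    (auto simp: ssm_diag_def ssm_diag_pd_def power2_eq_square intro!: DERIV_imp_deriv derivative_eq_intros)

lemma pd_ssm_diag:
  assumes "b differentiable (at (x $ 1))" "h differentiable (at (x $ 1))" "b (x $ 1) \<noteq> 0"
  shows "pd (\<lambda>y. ssm_diag b h k (y $ 1) (y $ 2)) c x = ssm_diag_pd b h k c (x $ 1) (x $ 2)"
  unfolding pd_function_of_r_theta deriv_ssm_diag_r[OF assms] deriv_ssm_diag_theta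
  by (simp add: ssm_diag_pd_def)

lemma christoffel_ssm_metric:
  assumes "b differentiable (at (x $ 1))" "h differentiable (at (x $ 1))"
    and nz: "\<And>k. ssm_diag b h k (x $ 1) (x $ 2) \<noteq> 0"
  shows "christoffel (ssm_metric b h) a c d x = ssm_christoffel b h a c d (x $ 1) (x $ 2)"
proof -
  have "b (x $ 1) \<noteq> 0"
    using nz[of 0] by (simp add: ssm_diag_def)
  then show ?thesis
    using assms
    by (subst christoffel_diagonal) (simp_all add: ssm_metric_eq pd_ssm_diag ssm_christoffel_def)
qed

lemma ssm_christoffel_theta_tt_rr: "k = 0 \<or> k = 1 \<Longrightarrow> ssm_christoffel b h 2 k k r = (\<lambda>_. 0)"
  by (auto simp: fun_eq_iff ssm_christoffel_def ssm_diag_pd_def)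

(* X(n,n) for the radial null vector n = (h/b) d/dt + b d/dr *)
definition radial_null_contraction ::
    "(real \<Rightarrow> real) \<Rightarrow> (real \<Rightarrow> real) \<Rightarrow> real \<Rightarrow> (4 \<Rightarrow> 4 \<Rightarrow> real) \<Rightarrow> real"
  where "radial_null_contraction b h r X = (h r / b r)\<^sup>2 * X 0 0 + (b r)\<^sup>2 * X 1 1"

lemma radial_null_contraction_metric:
  "x $ 1 = r \<Longrightarrow> b r \<noteq> 0 \<Longrightarrow> radial_null_contraction b h r (\<lambda>k l. ssm_metric b h x $ k $ l) = 0"
  by (simp add: radial_null_contraction_def ssm_metric_eq ssm_diag_def power_divide)

lemma radial_null_contraction_T_tensor:
  "x $ 1 = r \<Longrightarrow> b r \<noteq> 0 \<Longrightarrow> radial_null_contraction b h r (T_tensor L LF E B b h x) = 0"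
  unfolding radial_null_contraction_def T_tensor_def Let_def
  by (simp add: u_cov_def chi_cov_def ssm_metric_eq ssm_diag_def power_divide power2_eq_square
      algebra_simps)

lemma radial_null_contraction_K_tensor:
  "x $ 1 = r \<Longrightarrow> b r \<noteq> 0 \<Longrightarrow>
    radial_null_contraction b h r (K_tensor k1 k2 k3 b h x) = (b r)\<^sup>2 * (- 2 * k3 * (h r)\<^sup>2)"
  by (simp add: radial_null_contraction_def K_tensor_def u_cov_def chi_cov_def ssm_metric_eq
      ssm_diag_def field_simps eval_nat_numeral)

lemma radial_null_contraction_linear:
  "radial_null_contraction b h r (\<lambda>k l. X k l - c * Y k l) =
    radial_null_contraction b h r X - c * radial_null_contraction b h r Y"
  "radial_null_contraction b h r (\<lambda>k l. X k l + Y k l) =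
    radial_null_contraction b h r X + radial_null_contraction b h r Y"
  by (simp_all add: radial_null_contraction_def algebra_simps)

lemma cubic_ode_inverse_square:
  fixes h :: "real \<Rightarrow> real"
  assumes "is_interval I"
    and "\<And>r. r \<in> I \<Longrightarrow> h r \<noteq> 0"
    and "\<And>r. r \<in> I \<Longrightarrow> (h has_real_derivative - k * r * (h r) ^ 3) (at r)"
  shows "\<exists>c. \<forall>r\<in>I. 1 / (h r)\<^sup>2 = k * r\<^sup>2 + c"
proof -
  have "\<exists>c. \<forall>r\<in>I. 1 / (h r)\<^sup>2 - k * r\<^sup>2 = c"
  proof (rule has_field_derivative_zero_constant[OF is_interval_convex[OF assms(1)]])
    fix r assume r: "r \<in> I"
    have "((\<lambda>s. 1 / (h s)\<^sup>2 - k * s\<^sup>2) has_real_derivative 0) (at r)"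
      using assms(2,3)[OF r]
      by (auto intro!: derivative_eq_intros) (simp add: field_simps eval_nat_numeral)
    then show "((\<lambda>s. 1 / (h s)\<^sup>2 - k * s\<^sup>2) has_real_derivative 0) (at r within I)"
      by (rule has_field_derivative_at_within)
  qed
  then show ?thesis
    by (metis diff_eq_eq add.commute)
qed

locale ssm_chart =
  fixes b h :: "real \<Rightarrow> real" and I :: "real set"
  assumes open_I: "open I"
    and I_pos: "\<And>r. r \<in> I \<Longrightarrow> 0 < r"
    and b_pos: "\<And>r. r \<in> I \<Longrightarrow> 0 < b r"
    and h_pos: "\<And>r. r \<in> I \<Longrightarrow> 0 < h r"
    and b_differentiable: "\<And>r. r \<in> I \<Longrightarrow> b differentiable (at r)"
    and deriv_b_differentiable: "\<And>r. r \<in> I \<Longrightarrow> deriv b differentiable (at r)"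
    and h_differentiable: "\<And>r. r \<in> I \<Longrightarrow> h differentiable (at r)"
begin

lemma b_has_deriv: "r \<in> I \<Longrightarrow> (b has_real_derivative deriv b r) (at r)"
  using b_differentiable DERIV_deriv_iff_real_differentiable by blast

lemma deriv_b_has_deriv: "r \<in> I \<Longrightarrow> (deriv b has_real_derivative deriv (deriv b) r) (at r)"
  using deriv_b_differentiable DERIV_deriv_iff_real_differentiable by blast

lemma h_has_deriv: "r \<in> I \<Longrightarrow> (h has_real_derivative deriv h r) (at r)"
  using h_differentiable DERIV_deriv_iff_real_differentiable by blast

lemma christoffel_chart:
  assumes "x $ 1 \<in> I" "x $ 2 \<in> {0<..<pi}"
  shows "christoffel (ssm_metric b h) a c d x = ssm_christoffel b h a c d (x $ 1) (x $ 2)"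
proof (rule christoffel_ssm_metric)
  show "ssm_diag b h k (x $ 1) (x $ 2) \<noteq> 0" for k
    using b_pos[OF assms(1)] h_pos[OF assms(1)] I_pos[OF assms(1)] sin_gt_zero[of "x $ 2"] assms(2)
    by (auto simp: ssm_diag_def)
qed (use assms b_differentiable h_differentiable in auto)

lemma pd_christoffel_chart:
  assumes x: "x $ 1 \<in> I" "x $ 2 \<in> {0<..<pi}"
  shows "pd (\<lambda>y. christoffel (ssm_metric b h) a c d y) i x =
    (if i = 1 then deriv (\<lambda>s. ssm_christoffel b h a c d s (x $ 2)) (x $ 1)
     else if i = 2 then deriv (\<lambda>s. ssm_christoffel b h a c d (x $ 1) s) (x $ 2) else 0)"
proof -
  consider "i = 1" | "i = 2" | "i \<noteq> 1" "i \<noteq> 2" by blast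
  then show ?thesis
  proof cases
    case 1
    then show ?thesis
      using x by (subst pd_eq_deriv_on_line[OF open_I]) (simp_all add: christoffel_chart)
  next
    case 2
    then show ?thesis
      using x by (subst pd_eq_deriv_on_line[where U = "{0<..<pi}"]) (simp_all add: christoffel_chart)
  next
    case 3
    then show ?thesis
      using x
      by (subst pd_eq_deriv_on_line[where U = UNIV
            and F = "\<lambda>_. ssm_christoffel b h a c d (x $ 1) (x $ 2)"])
        (simp_all add: christoffel_chart)
  qed
qed

lemma deriv_christoffel_r_tt:
  assumes r: "r \<in> I"
  shows "deriv (\<lambda>s. ssm_christoffel b h 1 0 0 s \<theta>) r =
    3 * (b r)\<^sup>2 * (deriv b r)\<^sup>2 / (h r)\<^sup>2 + (b r) ^ 3 * deriv (deriv b) r / (h r)\<^sup>2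
    - 2 * (b r) ^ 3 * deriv b r * deriv h r / (h r) ^ 3"
proof (rule deriv_eq_on_open[OF open_I r])
  show "ssm_christoffel b h 1 0 0 s \<theta> = (b s) ^ 3 * deriv b s / (h s)\<^sup>2" if "s \<in> I" for s
    using b_pos[OF that] h_pos[OF that]
    by (simp add: ssm_christoffel_def ssm_diag_def ssm_diag_pd_def field_simps power2_eq_square
        power3_eq_cube)
  show "((\<lambda>s. (b s) ^ 3 * deriv b s / (h s)\<^sup>2) has_real_derivative
    3 * (b r)\<^sup>2 * (deriv b r)\<^sup>2 / (h r)\<^sup>2 + (b r) ^ 3 * deriv (deriv b) r / (h r)\<^sup>2
    - 2 * (b r) ^ 3 * deriv b r * deriv h r / (h r) ^ 3) (at r)"
    using h_pos[OF r]
    by (auto intro!: derivative_eq_intros b_has_deriv deriv_b_has_deriv h_has_deriv r)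
      (simp add: field_simps eval_nat_numeral)
qed

lemma deriv_christoffel_t_rt:
  assumes r: "r \<in> I"
  shows "deriv (\<lambda>s. ssm_christoffel b h 0 1 0 s \<theta>) r = deriv (deriv b) r / b r - (deriv b r / b r)\<^sup>2"
proof (rule deriv_eq_on_open[OF open_I r])
  show "ssm_christoffel b h 0 1 0 s \<theta> = deriv b s / b s" if "s \<in> I" for s
    using b_pos[OF that]
    by (simp add: ssm_christoffel_def ssm_diag_def ssm_diag_pd_def field_simps power2_eq_square)
  show "((\<lambda>s. deriv b s / b s) has_real_derivative deriv (deriv b) r / b r - (deriv b r / b r)\<^sup>2) (at r)"
    using b_pos[OF r]
    by (auto intro!: derivative_eq_intros b_has_deriv deriv_b_has_deriv r)
      (simp add: field_simps power2_eq_square)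
qed

lemma deriv_christoffel_angular:
  assumes r: "r \<in> I" and "sin \<theta> \<noteq> 0" and k: "k = 2 \<or> k = 3"
  shows "deriv (\<lambda>s. ssm_christoffel b h k 1 k s \<theta>) r = - 1 / r\<^sup>2"
proof (rule deriv_eq_on_open[OF open_I r])
  show "ssm_christoffel b h k 1 k s \<theta> = 1 / s" if "s \<in> I" for s
    using I_pos[OF that] \<open>sin \<theta> \<noteq> 0\<close> k
    by (auto simp: ssm_christoffel_def ssm_diag_def ssm_diag_pd_def field_simps power2_eq_square)
  show "((\<lambda>s. 1 / s) has_real_derivative - 1 / r\<^sup>2) (at r)"
    using I_pos[OF r]
    by (auto intro!: derivative_eq_intros simp: field_simps power2_eq_square)
qed

lemma christoffel_at:
  assumes "x $ 1 = r" "x $ 2 = \<theta>" "r \<in> I" "0 < \<theta>" "\<theta> < pi"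
  shows "christoffel (ssm_metric b h) a c d x = ssm_christoffel b h a c d r \<theta>"
    and "pd (christoffel (ssm_metric b h) a c d) i x =
      (if i = 1 then deriv (\<lambda>s. ssm_christoffel b h a c d s \<theta>) r
       else if i = 2 then deriv (ssm_christoffel b h a c d r) \<theta> else 0)"
  using christoffel_chart pd_christoffel_chart assms by simp_all

lemma ricci_tt:
  assumes x: "x $ 1 = r" "x $ 2 = \<theta>" and r: "r \<in> I" and \<theta>: "0 < \<theta>" "\<theta> < pi"
  shows "ricci (ssm_metric b h) 0 0 x =
    (b r)\<^sup>2 * (deriv b r)\<^sup>2 / (h r)\<^sup>2 + (b r) ^ 3 * deriv (deriv b) r / (h r)\<^sup>2
    - (b r) ^ 3 * deriv b r * deriv h r / (h r) ^ 3 + 2 * (b r) ^ 3 * deriv b r / (r * (h r)\<^sup>2)"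
proof -
  have sin: "sin \<theta> \<noteq> 0"
    using \<theta> sin_gt_zero by fastforce
  show ?thesis
    unfolding ricci_def sum_4_from_0 christoffel_at[OF x r \<theta>]
    using b_pos[OF r] h_pos[OF r] I_pos[OF r] sin
    apply (simp add: deriv_christoffel_r_tt[OF r] ssm_christoffel_theta_tt_rr)
    apply (simp add: ssm_christoffel_def ssm_diag_def ssm_diag_pd_def field_simps)
    by algebra
qed

lemma ricci_rr:
  assumes x: "x $ 1 = r" "x $ 2 = \<theta>" and r: "r \<in> I" and \<theta>: "0 < \<theta>" "\<theta> < pi"
  shows "ricci (ssm_metric b h) 1 1 x = - deriv (deriv b) r / b r
      + (deriv h r / h r - deriv b r / b r) * (2 / r + deriv b r / b r)"
proof -
  have sin: "sin \<theta> \<noteq> 0"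
    using \<theta> sin_gt_zero by fastforce
  show ?thesis
    unfolding ricci_def sum_4_from_0 christoffel_at[OF x r \<theta>]
    using b_pos[OF r] h_pos[OF r] I_pos[OF r] sin
    apply (simp add: deriv_christoffel_t_rt[OF r] deriv_christoffel_angular[OF r sin]
        ssm_christoffel_theta_tt_rr)
    apply (simp add: ssm_christoffel_def ssm_diag_def ssm_diag_pd_def field_simps)
    by algebra
qed

lemma radial_null_contraction_ricci:
  assumes "x $ 1 = r" "x $ 2 = \<theta>" "r \<in> I" "0 < \<theta>" "\<theta> < pi"
  shows "radial_null_contraction b h r (\<lambda>k l. ricci (ssm_metric b h) k l x) =
    (b r)\<^sup>2 * (2 * deriv h r / (r * h r))"
  using b_pos[OF \<open>r \<in> I\<close>] h_pos[OF \<open>r \<in> I\<close>] I_pos[OF \<open>r \<in> I\<close>]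
  unfolding radial_null_contraction_def ricci_tt[OF assms] ricci_rr[OF assms]
  by (simp add: field_simps power2_eq_square power3_eq_cube)

lemma deriv_h_if_field_equations:
  assumes x: "x $ 1 = r" "x $ 2 = \<theta>" and r: "r \<in> I" and \<theta>: "0 < \<theta>" "\<theta> < pi"
    and field_eqs: "\<And>k l. ricci (ssm_metric b h) k l x
        - (1/2) * scalar_curv (ssm_metric b h) x * ssm_metric b h x $ k $ l
      = T_tensor L LF E B b h x k l + K_tensor k1 k2 k3 b h x k l"
  shows "deriv h r = - k3 * r * (h r) ^ 3"
proof -
  have pos: "0 < b r" "0 < h r" "0 < r"
    using b_pos[OF r] h_pos[OF r] I_pos[OF r] .
  then have b_nz: "b r \<noteq> 0"
    by simp
  have "radial_null_contraction b h r (\<lambda>k l. ricci (ssm_metric b h) k l x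
        - (1/2) * scalar_curv (ssm_metric b h) x * ssm_metric b h x $ k $ l)
      = radial_null_contraction b h r (\<lambda>k l. T_tensor L LF E B b h x k l + K_tensor k1 k2 k3 b h x k l)"
    by (simp only: field_eqs)
  then have "radial_null_contraction b h r (\<lambda>k l. ricci (ssm_metric b h) k l x)
      - (1/2) * scalar_curv (ssm_metric b h) x
          * radial_null_contraction b h r (\<lambda>k l. ssm_metric b h x $ k $ l)
      = radial_null_contraction b h r (T_tensor L LF E B b h x)
        + radial_null_contraction b h r (K_tensor k1 k2 k3 b h x)"
    by (simp only: radial_null_contraction_linear)
  then have "(b r)\<^sup>2 * (2 * deriv h r / (r * h r)) = (b r)\<^sup>2 * (- 2 * k3 * (h r)\<^sup>2)"
    by (simp only: radial_null_contraction_ricci[OF x r \<theta>]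
        radial_null_contraction_metric[where b = b, OF x(1) b_nz]
        radial_null_contraction_T_tensor[where b = b, OF x(1) b_nz]
        radial_null_contraction_K_tensor[where b = b, OF x(1) b_nz])
  then have "2 * deriv h r / (r * h r) = - 2 * k3 * (h r)\<^sup>2"
    by (simp only: mult_left_cancel[OF power_not_zero[OF b_nz]])
  with pos show ?thesis
    by (simp add: field_simps power2_eq_square power3_eq_cube)
qed

end

theorem proposition11:
  fixes b h E B L LF :: "real \<Rightarrow> real" and I :: "real set" and k1 k2 k3 :: real
  assumes I_open: "open I" and I_interval: "is_interval I" and I_ne: "I \<noteq> {}"
    and I_pos: "I \<subseteq> {0<..}"
    and b_smooth: "smooth_on I b" and h_smooth: "smooth_on I h"
    and b_pos: "\<forall>r\<in>I. b r > 0" and h_pos: "\<forall>r\<in>I. h r > 0"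
    and L_deriv: "\<forall>y. (L has_real_derivative LF y) (at y)"
    and field_eqs: "\<forall>x::coord. x$1 \<in> I \<longrightarrow> 0 < x$2 \<longrightarrow> x$2 < pi \<longrightarrow>
       (\<forall>k l. ricci (ssm_metric b h) k l x
               - (1/2) * scalar_curv (ssm_metric b h) x * ssm_metric b h x $ k $ l
             = T_tensor L LF E B b h x k l + K_tensor k1 k2 k3 b h x k l)"
  shows "\<exists>k4. \<forall>r\<in>I. 1 / (h r)\<^sup>2 = k3 * r\<^sup>2 + k4"
proof -
  have b_diff: "(deriv ^^ n) b differentiable (at r)"
    and h_diff: "(deriv ^^ n) h differentiable (at r)" if "r \<in> I" for n r
    using b_smooth h_smooth that unfolding smooth_on_def by blast+
  interpret ssm_chart b h I
    using I_open I_pos b_pos h_pos b_diff[of _ 0] b_diff[of _ 1] h_diff[of _ 0]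
    by unfold_locales auto
  have deriv_h: "deriv h r = - k3 * r * (h r) ^ 3" if r: "r \<in> I" for r
  proof -
    define x :: coord where "x = (\<chi> j. if j = 1 then r else pi / 2)"
    have x: "x $ 1 = r" "x $ 2 = pi / 2"
      by (simp_all add: x_def)
    have \<theta>: "0 < pi / 2" "pi / 2 < pi"
      by simp_all
    show ?thesis
      by (rule deriv_h_if_field_equations[OF x r \<theta> field_eqs[rule_format, of x, unfolded x, OF r \<theta>]])
  qed
  show ?thesis
  proof (rule cubic_ode_inverse_square[OF I_interval])
    fix r assume r: "r \<in> I"
    show "h r \<noteq> 0" "(h has_real_derivative - k3 * r * (h r) ^ 3) (at r)"
      using h_pos[OF r] h_has_deriv[OF r] deriv_h[OF r] by simp_all
  qed
qed

end
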